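(* Consider the equation $g(x,y)=1$ with $y\ge x\ge0$. (i) The maximum value of $x$ among its solutions is $x_{\max}=-1/\log(2q)=\lambda_0$, and the maximum value of $y$ among its solutions is $y_{\max}=-1/\log(q(1+2p))=:\kappa_0$. (ii) If $x=x_{\max}$ then $y=-1/(p\log(2q))$. If $y=y_{\max}=\kappa_0$ then $x=2\kappa_0p/(2p+1)$. If $x=0$ then $y=-1/\log q$. (iii) For given $x$, the equation has exactly one solution in $y$ for $0\le x<-1/\log(2pq)$ and for $x=\lambda_0$, and exactly two solutions in $y$ for $-1/\log(2pq)\le x<\lambda_0$.
   Context: Let $0<q<p<1$ with $p+q=1$, and $g(x,y)=x\log x-y\log y+(y-x)\log(y-x)-x\log(2p)-y\log q$ for $y\ge x\ge0$, with the convention $0\log0=0$. *)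

theory Defs
  imports Complex_Main
begin

definition xlogx :: "real \<Rightarrow> real" where
  "xlogx t = (if t = 0 then 0 else t * ln t)"

definition gfun :: "real \<Rightarrow> real \<Rightarrow> real \<Rightarrow> real \<Rightarrow> real" where
  "gfun p q x y = xlogx x - xlogx y + xlogx (y - x) - x * ln (2 * p) - y * ln q"

definition gsol :: "real \<Rightarrow> real \<Rightarrow> (real \<times> real) set" where
  "gsol p q = {(x, y). 0 \<le> x \<and> x \<le> y \<and> gfun p q x y = 1}"

end

theory Submission
  imports Defs
begin

text \<open>
  Writing \<open>D\<^sub>a\<^sub>,\<^sub>b(x, u) = xlogx x + xlogx u - xlogx (x + u) - x ln a - u ln b\<close> for a
  probability vector \<open>(a, b)\<close>, Gibbs' inequality says \<open>D\<^sub>a\<^sub>,\<^sub>b(x, u) \<ge> 0\<close> with equality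
  exactly when \<open>x = a (x + u)\<close>. The function g splits in two ways as a linear form plus such a
  divergence:
  \<open>g(x, y) = -x log(2q) + D\<^sub>p\<^sub>,\<^sub>q(x, y - x) = -y log(q(1 + 2p)) + D\<^sub>r\<^sub>,\<^sub>s(x, y - x)\<close>
  with \<open>r = 2p/(1 + 2p)\<close>, \<open>s = 1/(1 + 2p)\<close>. So every solution of \<open>g = 1\<close> has
  \<open>-x log(2q) \<le> 1\<close> and \<open>-y log(q(1 + 2p)) \<le> 1\<close>, with equality only on the rays \<open>x = p y\<close> and
  \<open>x = r y\<close>; this gives the extremal solutions. For fixed \<open>x > 0\<close> the derivative
  \<open>log(y - x) - log(q y)\<close> shows that \<open>g(x, \<cdot>)\<close> decreases on \<open>[x, x/p]\<close> and increases afterwards;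
  its minimum \<open>-x log(2q)\<close> lies below 1 when \<open>x < \<lambda>\<^sub>0\<close>, and by the second bound it exceeds 1 for
  large \<open>y\<close>. Hence the level 1 is attained once or twice according as \<open>g(x, x) = -x log(2pq)\<close> is
  below 1 or not.
\<close>

lemma xlogx_has_real_derivative:
  assumes "0 < t"
  shows "(xlogx has_real_derivative ln t + 1) (at t)"
proof -
  have "((\<lambda>t. t * ln t) has_real_derivative ln t + 1) (at t)"
    using assms by (auto intro!: derivative_eq_intros)
  then show ?thesis
    by (rule has_field_derivative_transform_within_open[of _ _ _ "{0<..}"])
       (use assms in \<open>auto simp: xlogx_def\<close>)
qed

lemma continuous_on_xlogx: "continuous_on {0..} xlogx"
proof -
  have "((\<lambda>t::real. - (ln (inverse t) / inverse t)) \<longlongrightarrow> - 0) (at_right 0)"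
    using filterlim_compose[OF ln_x_over_x_tendsto_0 filterlim_inverse_at_top_right]
    by (intro tendsto_minus) (simp add: o_def)
  moreover have "\<forall>\<^sub>F t in at_right (0::real). - (ln (inverse t) / inverse t) = t * ln t"
    by (rule eventually_mono[OF eventually_at_right_less]) (simp add: ln_inverse divide_inverse)
  ultimately have "((\<lambda>t::real. t * ln t) \<longlongrightarrow> 0) (at_right 0)"
    by (auto intro: Lim_transform_eventually)
  moreover have "\<forall>\<^sub>F t in at_right (0::real). t * ln t = xlogx t"
    by (rule eventually_mono[OF eventually_at_right_less]) (simp add: xlogx_def)
  ultimately have at_0: "(xlogx \<longlongrightarrow> xlogx 0) (at_right 0)"
    by (auto simp: xlogx_def intro: Lim_transform_eventually)
  show ?thesis
    unfolding continuous_on_eq_continuous_within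
  proof
    fix t :: real
    assume "t \<in> {0..}"
    then consider "t = 0" | "0 < t"
      by fastforce
    then show "continuous (at t within {0..}) xlogx"
    proof cases
      case 1
      then show ?thesis
        using at_0 by (simp add: continuous_within at_within_Ici_at_right)
    next
      case 2
      show ?thesis
        using DERIV_isCont[OF xlogx_has_real_derivative[OF 2]]
        by (rule continuous_at_imp_continuous_at_within)
    qed
  qed
qed

lemma mult_ln_div_le:
  fixes x z :: real
  assumes "0 < x" "0 < z"
  shows "x * ln (z / x) \<le> z - x"
proof -
  have "x * ln (z / x) \<le> x * (z / x - 1)"
    using assms ln_le_minus_one[of "z / x"] by (intro mult_left_mono) auto
  also have "\<dots> = z - x"
    using assms by (simp add: field_simps)
  finally show ?thesis .
qed

lemma mult_ln_div_eq_iff: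
  fixes x z :: real
  assumes "0 < x" "0 < z"
  shows "x * ln (z / x) = z - x \<longleftrightarrow> z = x"
proof
  assume "x * ln (z / x) = z - x"
  then have "ln (z / x) = z / x - 1"
    using assms by (simp add: field_simps)
  then show "z = x"
    using assms ln_eq_minus_one[of "z / x"] by simp
qed simp

text \<open>\<open>(x + u)\<close> times the Kullback-Leibler divergence of \<open>(x, u) / (x + u)\<close> from \<open>(a, b)\<close>.\<close>

definition binary_divergence :: "real \<Rightarrow> real \<Rightarrow> real \<Rightarrow> real \<Rightarrow> real" where
  "binary_divergence a b x u = xlogx x + xlogx u - xlogx (x + u) - x * ln a - u * ln b"

lemma binary_divergence_eq_sum:
  assumes "0 < a" "0 < b" "a + b = 1" "0 < x" "0 < u"
  shows "binary_divergence a b x u =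
           (a * (x + u) - x - x * ln (a * (x + u) / x)) + (b * (x + u) - u - u * ln (b * (x + u) / u))"
proof -
  have ln_a: "ln (a * (x + u) / x) = ln a + ln (x + u) - ln x"
    and ln_b: "ln (b * (x + u) / u) = ln b + ln (x + u) - ln u"
    using assms by (simp_all add: ln_div ln_mult)
  have "a * (x + u) + b * (x + u) = x + u"
    using assms(3) by (metis distrib_right mult_1)
  then show ?thesis
    unfolding binary_divergence_def ln_a ln_b
    using assms by (simp add: xlogx_def algebra_simps)
qed

lemma binary_divergence_nonneg:
  assumes "0 < a" "0 < b" "a + b = 1" "0 \<le> x" "0 \<le> u"
  shows "0 \<le> binary_divergence a b x u"
proof (cases "x = 0 \<or> u = 0")
  case True
  have "ln a \<le> 0" "ln b \<le> 0"
    using assms by auto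
  with True show ?thesis
    using assms by (auto simp: binary_divergence_def xlogx_def mult_nonneg_nonpos)
next
  case False
  with assms show ?thesis
    using mult_ln_div_le[of x "a * (x + u)"] mult_ln_div_le[of u "b * (x + u)"]
    by (simp add: binary_divergence_eq_sum)
qed

lemma binary_divergence_eq_0_iff:
  assumes "0 < a" "0 < b" "a + b = 1" "0 \<le> x" "0 \<le> u"
  shows "binary_divergence a b x u = 0 \<longleftrightarrow> x = a * (x + u)"
proof -
  have "ln a < 0" "ln b < 0"
    using assms by auto
  consider "x = 0" | "u = 0" | "0 < x" "0 < u"
    using assms by fastforce
  then show ?thesis
  proof cases
    case 1
    with \<open>ln b < 0\<close> show ?thesis
      using assms by (auto simp: binary_divergence_def xlogx_def)
  next
    case 2
    with \<open>ln a < 0\<close> show ?thesis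
      using assms by (auto simp: binary_divergence_def xlogx_def)
  next
    case 3
    have "a * (x + u) + b * (x + u) = x + u"
      using assms(3) by (metis distrib_right mult_1)
    then show ?thesis
      using 3 assms mult_ln_div_le[of x "a * (x + u)"] mult_ln_div_le[of u "b * (x + u)"]
        mult_ln_div_eq_iff[of x "a * (x + u)"] mult_ln_div_eq_iff[of u "b * (x + u)"]
      by (auto simp: binary_divergence_eq_sum)
  qed
qed

lemma card_level_set_valley:
  fixes h :: "real \<Rightarrow> real"
  assumes "a \<le> m" "m \<le> b"
    and cont: "continuous_on {a..} h"
    and dec: "strict_antimono_on {a..m} h" and inc: "strict_mono_on {m..} h"
    and "h m < c" "c \<le> h b"
  shows "card {y. a \<le> y \<and> h y = c} = (if h a < c then 1 else 2)"
proof -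
  have cont_on: "continuous_on {s..t} h" if "a \<le> s" for s t
    using continuous_on_subset[OF cont] that by auto
  obtain y2 where y2: "m \<le> y2" "h y2 = c"
    using IVT'[of h m c b] assms cont_on[of m b] by auto
  have right: "y = y2" if "m \<le> y" "h y = c" for y
    using inj_onD[OF strict_mono_on_imp_inj_on[OF inc], of y y2] y2 that by simp
  have below_m: "y < m" if "y \<le> m" "h y = c" for y
    using that \<open>h m < c\<close> by (cases "y = m") auto
  show ?thesis
  proof (cases "h a < c")
    case True
    have "h y < c" if "a \<le> y" "y \<le> m" for y
      using monotone_onD[OF dec, of a y] that True \<open>a \<le> m\<close> by (cases "y = a") auto
    then have "y = y2" if "a \<le> y" "h y = c" for y
      using right that by (cases "y \<le> m") auto
    then have "{y. a \<le> y \<and> h y = c} = {y2}"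
      using y2 \<open>a \<le> m\<close> by auto
    with True show ?thesis
      by simp
  next
    case False
    obtain y1 where y1: "a \<le> y1" "y1 \<le> m" "h y1 = c"
      using IVT2'[of h m c a] False assms cont_on[of a m] by auto
    have "inj_on h {a..m}"
      using dec by (simp add: strict_antimono_iff_antimono)
    then have left: "y = y1" if "a \<le> y" "y \<le> m" "h y = c" for y
      using inj_onD[of h "{a..m}" y y1] y1 that by simp
    have "y = y1 \<or> y = y2" if "a \<le> y" "h y = c" for y
      using left right that by (cases "y \<le> m") auto
    then have "{y. a \<le> y \<and> h y = c} = {y1, y2}"
      using y1 y2 \<open>a \<le> m\<close> by auto
    moreover have "y1 < y2"
      using below_m[OF y1(2,3)] y2 by linarith
    ultimately show ?thesis
      using False by simp
  qed
qed

lemma le_minus_one_div_iff: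
  fixes c x :: real
  assumes "c < 0"
  shows "x \<le> -1 / c \<longleftrightarrow> - x * c \<le> 1"
  using assms by (auto simp: field_simps)

lemma less_minus_one_div_iff:
  fixes c x :: real
  assumes "c < 0"
  shows "x < -1 / c \<longleftrightarrow> - x * c < 1"
  using assms by (auto simp: field_simps)

lemma mem_gsol_iff: "(x, y) \<in> gsol p q \<longleftrightarrow> 0 \<le> x \<and> x \<le> y \<and> gfun p q x y = 1"
  by (simp add: gsol_def)

locale biased_coin =
  fixes p q :: real
  assumes q_pos: "0 < q" and q_less_p: "q < p" and p_less_1: "p < 1" and p_plus_q: "p + q = 1"
begin

lemma p_pos: "0 < p"
  using q_pos q_less_p by simp

lemma ln_q_neg: "ln q < 0"
  using q_pos q_less_p p_less_1 by simp

lemma ln_2q_neg: "ln (2 * q) < 0"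
  using q_pos q_less_p p_plus_q by simp

lemma ln_2pq_less_ln_2q: "ln (2 * p * q) < ln (2 * q)"
  using q_pos p_pos p_less_1 by simp

lemma ln_q_1_2p_neg: "ln (q * (1 + 2 * p)) < 0"
proof -
  have p_eq: "p = 1 - q"
    using p_plus_q by simp
  have "q * (1 + 2 * p) = 1 - p * (p - q)"
    unfolding p_eq by (simp add: algebra_simps)
  also have "\<dots> < 1"
    using p_pos q_less_p by simp
  finally show ?thesis
    using q_pos p_pos by simp
qed

lemma gfun_eq_divergence_p:
  "gfun p q x y = - x * ln (2 * q) + binary_divergence p q x (y - x)"
  using p_pos q_pos by (simp add: gfun_def binary_divergence_def ln_mult algebra_simps)

lemma gfun_eq_divergence_r:
  "gfun p q x y = - y * ln (q * (1 + 2 * p))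
     + binary_divergence (2 * p / (1 + 2 * p)) (1 / (1 + 2 * p)) x (y - x)"
proof -
  have ln_r: "ln (2 * p / (1 + 2 * p)) = ln (2 * p) - ln (1 + 2 * p)"
    and ln_s: "ln (1 / (1 + 2 * p)) = - ln (1 + 2 * p)"
    and ln_k: "ln (q * (1 + 2 * p)) = ln q + ln (1 + 2 * p)"
    using p_pos q_pos by (simp_all add: ln_div ln_mult)
  show ?thesis
    unfolding gfun_def binary_divergence_def ln_r ln_s ln_k by (simp add: algebra_simps)
qed

lemma gfun_ge_fst_bound:
  assumes "0 \<le> x" "x \<le> y"
  shows "- x * ln (2 * q) \<le> gfun p q x y"
  using binary_divergence_nonneg[of p q x "y - x"] assms p_pos q_pos p_plus_q
  by (simp add: gfun_eq_divergence_p)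

lemma gfun_eq_fst_bound_iff:
  assumes "0 \<le> x" "x \<le> y"
  shows "gfun p q x y = - x * ln (2 * q) \<longleftrightarrow> x = p * y"
  using binary_divergence_eq_0_iff[of p q x "y - x"] assms p_pos q_pos p_plus_q
  by (simp add: gfun_eq_divergence_p)

lemma gfun_ge_snd_bound:
  assumes "0 \<le> x" "x \<le> y"
  shows "- y * ln (q * (1 + 2 * p)) \<le> gfun p q x y"
  using binary_divergence_nonneg[of "2 * p / (1 + 2 * p)" "1 / (1 + 2 * p)" x "y - x"] assms p_pos
  by (simp add: gfun_eq_divergence_r add_divide_distrib[symmetric])

lemma gfun_eq_snd_bound_iff:
  assumes "0 \<le> x" "x \<le> y"
  shows "gfun p q x y = - y * ln (q * (1 + 2 * p)) \<longleftrightarrow> x = 2 * p * y / (1 + 2 * p)"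
  using binary_divergence_eq_0_iff[of "2 * p / (1 + 2 * p)" "1 / (1 + 2 * p)" x "y - x"] assms p_pos
  by (simp add: gfun_eq_divergence_r add_divide_distrib[symmetric])

lemma gsol_fst_le:
  assumes "(x, y) \<in> gsol p q"
  shows "x \<le> -1 / ln (2 * q)"
  unfolding le_minus_one_div_iff[OF ln_2q_neg]
  using assms gfun_ge_fst_bound[of x y] by (auto simp: mem_gsol_iff)

lemma gsol_snd_le:
  assumes "(x, y) \<in> gsol p q"
  shows "y \<le> -1 / ln (q * (1 + 2 * p))"
  unfolding le_minus_one_div_iff[OF ln_q_1_2p_neg]
  using assms gfun_ge_snd_bound[of x y] by (auto simp: mem_gsol_iff)

lemma gsol_fst_max_iff:
  "(-1 / ln (2 * q), y) \<in> gsol p q \<longleftrightarrow> y = -1 / (p * ln (2 * q))"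
proof -
  define lam where "lam = -1 / ln (2 * q)"
  have "0 < lam" "- lam * ln (2 * q) = 1" and y_eq: "y = -1 / (p * ln (2 * q)) \<longleftrightarrow> lam = p * y"
    using ln_2q_neg p_pos by (auto simp: lam_def field_simps)
  moreover have "lam \<le> y" if "lam = p * y"
    using that \<open>0 < lam\<close> p_pos p_less_1 by (auto simp: zero_less_mult_iff intro: mult_left_le_one_le)
  ultimately show ?thesis
    using gfun_ge_fst_bound[of lam y] gfun_eq_fst_bound_iff[of lam y]
    unfolding lam_def[symmetric] y_eq by (auto simp: mem_gsol_iff)
qed

lemma gsol_snd_max_iff:
  assumes "kap = -1 / ln (q * (1 + 2 * p))"
  shows "(x, kap) \<in> gsol p q \<longleftrightarrow> x = 2 * kap * p / (2 * p + 1)"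
proof -
  have "0 < kap"
    using assms less_minus_one_div_iff[OF ln_q_1_2p_neg, of 0] by simp
  moreover have "- kap * ln (q * (1 + 2 * p)) = 1"
    using assms ln_q_1_2p_neg by simp
  moreover have "0 \<le> x \<and> x \<le> kap" if "x = 2 * kap * p / (2 * p + 1)"
    using that \<open>0 < kap\<close> p_pos by (simp add: divide_le_eq ring_distribs)
  ultimately show ?thesis
    using gfun_ge_snd_bound[of x kap] gfun_eq_snd_bound_iff[of x kap]
    by (auto simp: mem_gsol_iff ac_simps)
qed

lemma gsol_fst_zero_iff: "(0, y) \<in> gsol p q \<longleftrightarrow> y = -1 / ln q"
proof -
  have "gfun p q 0 y = - y * ln q"
    by (simp add: gfun_def xlogx_def)
  moreover have "- y * ln q = 1 \<longleftrightarrow> y = -1 / ln q"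
    using ln_q_neg by (auto simp: field_simps)
  moreover have "0 < -1 / ln q"
    using less_minus_one_div_iff[OF ln_q_neg, of 0] by simp
  ultimately show ?thesis
    unfolding mem_gsol_iff by auto
qed

lemma neg_inverse_ln_2pq_bounds: "0 < -1 / ln (2 * p * q)" "-1 / ln (2 * p * q) < -1 / ln (2 * q)"
  using ln_2pq_less_ln_2q ln_2q_neg by (simp_all add: field_simps)

lemma p_mult_plus_q_mult: "p * y + q * y = y"
  by (metis distrib_right mult_1 p_plus_q)

lemma gfun_diag: "gfun p q x x = - x * ln (2 * p * q)"
  using p_pos q_pos by (simp add: gfun_def xlogx_def ln_mult algebra_simps)

lemma gfun_has_real_derivative:
  assumes "0 \<le> x" "x < y"
  shows "(gfun p q x has_real_derivative ln (y - x) - ln (q * y)) (at y)"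
proof -
  have "(xlogx has_real_derivative ln y + 1) (at y)"
    using assms by (intro xlogx_has_real_derivative) simp
  moreover have "((\<lambda>y. xlogx (y - x)) has_real_derivative (ln (y - x) + 1) * 1) (at y)"
    using assms by (intro DERIV_chain2[OF xlogx_has_real_derivative]) (auto intro!: derivative_eq_intros)
  ultimately have "((\<lambda>y. xlogx x - xlogx y + xlogx (y - x) - x * ln (2 * p) - y * ln q)
      has_real_derivative 0 - (ln y + 1) + (ln (y - x) + 1) * 1 - 0 - 1 * ln q) (at y)"
    by (intro DERIV_diff DERIV_add DERIV_const DERIV_cmult_right DERIV_ident)
  moreover have "ln (q * y) = ln q + ln y"
    using assms q_pos by (simp add: ln_mult)
  ultimately show ?thesis
    by (simp add: gfun_def[abs_def] algebra_simps)
qed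

lemma continuous_on_gfun:
  assumes "0 \<le> x"
  shows "continuous_on {x..} (gfun p q x)"
proof -
  have "continuous_on {x..} xlogx"
    using continuous_on_subset[OF continuous_on_xlogx] assms by auto
  moreover have "continuous_on {x..} (\<lambda>y. xlogx (y - x))"
    by (rule continuous_on_compose2[OF continuous_on_xlogx]) (auto intro!: continuous_intros)
  ultimately show ?thesis
    unfolding gfun_def[abs_def] by (intro continuous_intros)
qed

lemma gfun_strict_antimono:
  assumes "0 < x"
  shows "strict_antimono_on {x..x / p} (gfun p q x)"
proof (rule monotone_onI)
  fix a b
  assume ab: "a \<in> {x..x / p}" "b \<in> {x..x / p}" "a < b"
  show "gfun p q x b < gfun p q x a"
  proof (rule DERIV_neg_imp_decreasing_open[OF \<open>a < b\<close>])
    fix y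
    assume "a < y" "y < b"
    have "x < y"
      using ab \<open>a < y\<close> by simp
    have "p * y < p * b"
      using p_pos \<open>y < b\<close> by simp
    moreover have "p * b \<le> x"
      using ab p_pos by (simp add: pos_le_divide_eq mult.commute)
    ultimately have "p * y < x"
      by linarith
    with \<open>x < y\<close> have "ln (y - x) < ln (q * y)"
      using p_mult_plus_q_mult[of y] by simp
    then show "\<exists>d. (gfun p q x has_real_derivative d) (at y) \<and> d < 0"
      using gfun_has_real_derivative[of x y] assms \<open>x < y\<close> by auto
  next
    show "continuous_on {a..b} (gfun p q x)"
      using continuous_on_subset[OF continuous_on_gfun[of x]] assms ab by auto
  qed
qed

lemma gfun_strict_mono:
  assumes "0 < x"
  shows "strict_mono_on {x / p..} (gfun p q x)"
proof (rule monotone_onI)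
  have "x < x / p"
    using assms p_pos p_less_1 by (simp add: less_divide_eq)
  fix a b
  assume ab: "a \<in> {x / p..}" "b \<in> {x / p..}" "a < b"
  show "gfun p q x a < gfun p q x b"
  proof (rule DERIV_pos_imp_increasing_open[OF \<open>a < b\<close>])
    fix y
    assume "a < y" "y < b"
    with ab have "x / p < y"
      by simp
    with \<open>x < x / p\<close> have "x < y"
      by linarith
    from \<open>x / p < y\<close> have "x < p * y"
      using p_pos by (simp add: pos_divide_less_eq mult.commute)
    with \<open>x < y\<close> have "ln (q * y) < ln (y - x)"
      using p_mult_plus_q_mult[of y] q_pos assms by simp
    then show "\<exists>d. (gfun p q x has_real_derivative d) (at y) \<and> d > 0"
      using gfun_has_real_derivative[of x y] assms \<open>x < y\<close> by auto
  next
    show "continuous_on {a..b} (gfun p q x)"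
      using continuous_on_subset[OF continuous_on_gfun[of x]] assms ab \<open>x < x / p\<close> by auto
  qed
qed

lemma card_gsol_fiber:
  assumes "0 < x" "x < -1 / ln (2 * q)"
  shows "card {y. (x, y) \<in> gsol p q} = (if x < -1 / ln (2 * p * q) then 1 else 2)"
proof -
  define kap where "kap = -1 / ln (q * (1 + 2 * p))"
  define b where "b = max (x / p) kap"
  have "x \<le> x / p"
    using assms p_pos p_less_1 by (simp add: le_divide_eq)
  have fiber: "{y. (x, y) \<in> gsol p q} = {y. x \<le> y \<and> gfun p q x y = 1}"
    using assms by (auto simp: mem_gsol_iff)
  have "gfun p q x (x / p) = - x * ln (2 * q)"
    using gfun_eq_fst_bound_iff[of x "x / p"] assms p_pos \<open>x \<le> x / p\<close> by simp
  also have "\<dots> < 1"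
    using assms(2) less_minus_one_div_iff[OF ln_2q_neg] by simp
  finally have valley_below: "gfun p q x (x / p) < 1" .
  have "1 = - kap * ln (q * (1 + 2 * p))"
    using ln_q_1_2p_neg by (simp add: kap_def)
  also have "\<dots> \<le> - b * ln (q * (1 + 2 * p))"
    using ln_q_1_2p_neg by (intro mult_right_mono_neg) (auto simp: b_def)
  also have "\<dots> \<le> gfun p q x b"
    using gfun_ge_snd_bound[of x b] assms \<open>x \<le> x / p\<close> by (simp add: b_def)
  finally have far_above: "1 \<le> gfun p q x b" .
  have "gfun p q x x < 1 \<longleftrightarrow> x < -1 / ln (2 * p * q)"
    using less_minus_one_div_iff[of "ln (2 * p * q)" x] ln_2pq_less_ln_2q ln_2q_neg
    by (simp add: gfun_diag)
  then show ?thesis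
    unfolding fiber
    using card_level_set_valley[of x "x / p" b "gfun p q x" 1] \<open>x \<le> x / p\<close> valley_below far_above
      continuous_on_gfun[of x] gfun_strict_antimono[of x] gfun_strict_mono[of x] assms
    by (simp add: b_def)
qed

lemma card_gsol_fiber_eq_1:
  assumes "(0 \<le> x \<and> x < -1 / ln (2 * p * q)) \<or> x = -1 / ln (2 * q)"
  shows "card {y. (x, y) \<in> gsol p q} = 1"
proof -
  consider "x = -1 / ln (2 * q)" | "x = 0" | "0 < x" "x < -1 / ln (2 * p * q)"
    using assms by fastforce
  then show ?thesis
  proof cases
    case 1
    have "{y. (x, y) \<in> gsol p q} = {-1 / (p * ln (2 * q))}"
      unfolding 1 gsol_fst_max_iff by blast
    then show ?thesis
      by simp
  next
    case 2
    then have "{y. (x, y) \<in> gsol p q} = {-1 / ln q}"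
      by (auto simp: gsol_fst_zero_iff)
    then show ?thesis
      by simp
  next
    case 3
    then show ?thesis
      using card_gsol_fiber[of x] neg_inverse_ln_2pq_bounds by simp
  qed
qed

lemma card_gsol_fiber_eq_2:
  assumes "-1 / ln (2 * p * q) \<le> x" "x < -1 / ln (2 * q)"
  shows "card {y. (x, y) \<in> gsol p q} = 2"
  using card_gsol_fiber[of x] neg_inverse_ln_2pq_bounds assms by simp

end

theorem lemma6p2:
  fixes p q :: real
  assumes "0 < q" "q < p" "p < 1" "p + q = 1"
  defines "S \<equiv> gsol p q"
    and "lam0 \<equiv> -1 / ln (2 * q)"
    and "kap0 \<equiv> -1 / ln (q * (1 + 2 * p))"
  shows "((\<exists>y. (lam0, y) \<in> S) \<and> (\<forall>(x, y) \<in> S. x \<le> lam0))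
       \<and> ((\<exists>x. (x, kap0) \<in> S) \<and> (\<forall>(x, y) \<in> S. y \<le> kap0))
       \<and> (\<forall>y. (lam0, y) \<in> S \<longrightarrow> y = -1 / (p * ln (2 * q)))
       \<and> (\<forall>x. (x, kap0) \<in> S \<longrightarrow> x = 2 * kap0 * p / (2 * p + 1))
       \<and> (\<forall>y. (0, y) \<in> S \<longrightarrow> y = -1 / ln q)
       \<and> (\<forall>x. ((0 \<le> x \<and> x < -1 / ln (2 * p * q)) \<or> x = lam0)
               \<longrightarrow> card {y. (x, y) \<in> S} = 1)
       \<and> (\<forall>x. (-1 / ln (2 * p * q) \<le> x \<and> x < lam0)
               \<longrightarrow> card {y. (x, y) \<in> S} = 2)"
proof -
  interpret biased_coin p q
    using assms(1-4) by unfold_locales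
  have kap0: "kap0 = -1 / ln (q * (1 + 2 * p))"
    by (simp add: kap0_def)
  show ?thesis
    unfolding S_def lam0_def
    using gsol_fst_max_iff gsol_fst_le gsol_snd_max_iff[OF kap0] gsol_snd_le[folded kap0]
      gsol_fst_zero_iff card_gsol_fiber_eq_1 card_gsol_fiber_eq_2
    by blast
qed

end
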